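(* Let $q$ be a prime power, and let $m$ and $j$ be positive integers with $m>1$, $1\le j\le q^m-1$ and $\gcd(j,q^m-1)=1$. Let $\mu_j(x)=\sum_{i=0}^{m-1}x^{jq^i}=\mathrm{Tr}_{\mathbf{F}_{q^m}/\mathbf{F}_q}(x^j)$ and let $h(x)\in\mathbf{F}_q[x]$. Then $x\,h(\mu_j(x))$ is a permutation polynomial of $\mathbf{F}_{q^m}$ if and only if $h(0)\ne0$ and $x\,h(x)^j$ permutes $\mathbf{F}_q$.
   Context: $\mathrm{Tr}_{\mathbf{F}_{q^m}/\mathbf{F}_q}(x)=x+x^q+\cdots+x^{q^{m-1}}$. A permutation polynomial of a finite field $K$ is a polynomial inducing a bijection $K\to K$. *)

theory Defs
  imports "HOL-Computational_Algebra.Polynomial" "HOL-Computational_Algebra.Primes"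
begin

definition subfield_Fq :: "nat \<Rightarrow> 'a::field set" where
  "subfield_Fq q = {x. x ^ q = x}"

definition mu_poly_fun :: "nat \<Rightarrow> nat \<Rightarrow> nat \<Rightarrow> 'a::field \<Rightarrow> 'a" where
  "mu_poly_fun q m j x = (\<Sum>i<m. x ^ (j * q ^ i))"

end

theory Submission
  imports Defs
begin

text \<open>
  Let \<open>F\<close> be the fixed field of \<open>x \<mapsto> x^q\<close>, \<open>f x = x h(\<mu>\<^sub>j x)\<close> and \<open>g t = t h(t)^j\<close>.
  As \<open>h\<close> has coefficients in \<open>F\<close> and \<open>\<mu>\<^sub>j\<close> takes values in \<open>F\<close>, the factor \<open>h(\<mu>\<^sub>j x)\<close> lies
  in \<open>F\<close> and passes through the trace, so \<open>\<mu>\<^sub>j (f x) = g (\<mu>\<^sub>j x)\<close>. Every fibre of the trace is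
  the root set of a polynomial of degree \<open>q^(m-1)\<close>; since the \<open>q^m\<close> field elements fill at
  most \<open>q\<close> fibres over \<open>F\<close>, each of them has exactly \<open>q^(m-1) \<ge> 2\<close> elements. Together with
  \<open>x \<mapsto> x^j\<close> being a permutation, \<open>\<mu>\<^sub>j\<close> maps onto \<open>F\<close> and vanishes at some \<open>x \<noteq> 0\<close>. Then
  \<open>f\<close> is injective iff \<open>h(0) \<noteq> 0\<close> and \<open>g\<close> is injective on \<open>F\<close>: if \<open>h(0) = 0\<close>, \<open>f\<close> identifies
  that \<open>x\<close> with \<open>0\<close>; otherwise \<open>f x = f y\<close> forces \<open>\<mu>\<^sub>j x = \<mu>\<^sub>j y\<close>, hence equal factors \<open>h(\<mu>\<^sub>j x)\<close>.
\<close>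

text \<open>The library's \<open>finite_field_power_card_eq_same\<close> needs the sort \<open>finite_field\<close>, which a
  type variable of sort \<open>{finite,field}\<close> cannot be given.\<close>

lemma power_card_UNIV_eq_self:
  fixes x :: "'a::{finite,field}"
  shows "x ^ card (UNIV :: 'a set) = x"
proof (cases "x = 0")
  case False
  let ?U = "UNIV - {0::'a}"
  have "x ^ card ?U * \<Prod>?U = (\<Prod>y\<in>?U. x * y)"
    by (simp add: prod.distrib)
  also have "\<dots> = \<Prod>?U"
    by (rule prod.reindex_bij_witness[of _ "\<lambda>y. y / x" "\<lambda>y. x * y"]) (use False in auto)
  finally have "x ^ card ?U = 1"
    by simp
  moreover have "card (UNIV :: 'a set) = Suc (card ?U)"
    using finite_UNIV_card_ge_0[where 'a='a] by (simp add: card_Diff_singleton)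
  ultimately show ?thesis
    by (simp only: power_Suc mult_1_right)
qed (simp add: finite_UNIV_card_ge_0)

text \<open>This is \<open>CHAR_dvd_CARD\<close> of \<open>HOL-Number_Theory.Residues\<close>, whose import would shadow
  the polynomial constants \<open>coeff\<close> and \<open>monom\<close> by those of \<open>HOL-Algebra\<close>.\<close>

lemma CHAR_dvd_card_UNIV: "CHAR('a::{finite,ring_1}) dvd card (UNIV :: 'a set)"
proof -
  have "(\<Sum>y\<in>UNIV. 1 + y) = (\<Sum>y\<in>UNIV. y :: 'a)"
    by (rule sum.reindex_bij_witness[of _ "\<lambda>y. y - 1" "\<lambda>y. 1 + y"]) auto
  then have "of_nat (card (UNIV :: 'a set)) = (0 :: 'a)"
    by (simp add: sum.distrib)
  then show ?thesis
    by (simp add: of_nat_eq_0_iff_char_dvd)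
qed

lemma CHAR_eq_prime_of_card:
  assumes "prime p" "card (UNIV :: 'a::{finite,field} set) = p ^ n"
  shows "CHAR('a) = p"
proof -
  have "prime CHAR('a)"
    by (simp add: finite_imp_CHAR_pos prime_CHAR_semidom)
  moreover have "CHAR('a) dvd p ^ n"
    using CHAR_dvd_card_UNIV[where 'a='a] assms(2) by simp
  ultimately show ?thesis
    using assms(1) prime_dvd_power primes_dvd_imp_eq by blast
qed

lemma bij_power_if_coprime:
  assumes "j > 0" "coprime j (card (UNIV :: 'a::{finite,field} set) - 1)"
  shows "bij (\<lambda>x::'a. x ^ j)"
proof -
  let ?N = "card (UNIV :: 'a set)"
  obtain a b where ab: "j * a = (?N - 1) * b + 1"
    using bezout_nat[of j "?N - 1"] assms by auto
  have "(x ^ j) ^ a = x" for x :: 'a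
  proof (cases "x = 0")
    case False
    have "x * x ^ (?N - 1) = x ^ ?N"
      using finite_UNIV_card_ge_0[where 'a='a] by (simp flip: power_Suc)
    with False have "x ^ (?N - 1) = 1"
      by (simp add: power_card_UNIV_eq_self)
    have "(x ^ j) ^ a = (x ^ (?N - 1)) ^ b * x"
      by (simp add: ab power_add flip: power_mult)
    with \<open>x ^ (?N - 1) = 1\<close> show ?thesis
      by simp
  qed (simp add: ab flip: power_mult)
  then have "inj (\<lambda>x::'a. x ^ j)"
    by (metis injI)
  then show ?thesis
    by (simp add: bij_def finite_UNIV_inj_surj)
qed

lemma power_power_eq_self:
  fixes c :: "'a::monoid_mult"
  assumes "c ^ q = c"
  shows "c ^ q ^ i = c"
proof (induction i)
  case (Suc i)
  have "c ^ q ^ Suc i = (c ^ q) ^ q ^ i"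
    by (simp only: power_Suc power_mult)
  with Suc assms show ?case
    by simp
qed simp

lemma zero_mem_subfield_Fq: "q > 0 \<Longrightarrow> 0 \<in> subfield_Fq q"
  by (simp add: subfield_Fq_def)

lemma mult_mem_subfield_Fq: "a \<in> subfield_Fq q \<Longrightarrow> b \<in> subfield_Fq q \<Longrightarrow> a * b \<in> subfield_Fq q"
  by (simp add: subfield_Fq_def power_mult_distrib)

lemma power_mem_subfield_Fq:
  assumes "a \<in> subfield_Fq q"
  shows "a ^ n \<in> subfield_Fq q"
proof -
  have "(a ^ n) ^ q = (a ^ q) ^ n"
    by (simp only: power_mult[symmetric] mult.commute)
  with assms show ?thesis
    by (simp add: subfield_Fq_def)
qed

lemma sum_mem_subfield_Fq:
  fixes f :: "'b \<Rightarrow> 'a::field"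
  assumes "prime CHAR('a)" "q = CHAR('a) ^ k" "\<And>i. i \<in> A \<Longrightarrow> f i \<in> subfield_Fq q"
  shows "sum f A \<in> subfield_Fq q"
  using assms by (simp add: subfield_Fq_def freshmans_dream_sum')

lemma poly_mem_subfield_Fq:
  fixes h :: "'a::field poly"
  assumes "prime CHAR('a)" "q = CHAR('a) ^ k"
    and "\<forall>i. coeff h i \<in> subfield_Fq q" "t \<in> subfield_Fq q"
  shows "poly h t \<in> subfield_Fq q"
  unfolding poly_altdef
  using assms by (intro sum_mem_subfield_Fq mult_mem_subfield_Fq power_mem_subfield_Fq) auto

lemma card_subfield_Fq_le:
  assumes "q \<ge> 2"
  shows "card (subfield_Fq q :: 'a::field set) \<le> q"
proof -
  define P :: "'a poly" where "P = monom 1 q - [:0, 1:]"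
  have "coeff P q = 1"
    using assms by (simp add: P_def coeff_pCons split: nat.splits)
  then have "P \<noteq> 0"
    by auto
  have "subfield_Fq q = {x. poly P x = 0}"
    by (auto simp: P_def poly_monom subfield_Fq_def)
  also have "card \<dots> \<le> degree P"
    by (rule card_poly_roots_bound) fact
  also have "degree P \<le> q"
    unfolding P_def using assms by (intro order.trans[OF degree_diff_le_max]) (auto simp: degree_monom_le)
  finally show ?thesis .
qed

definition frobenius_trace :: "nat \<Rightarrow> nat \<Rightarrow> 'a::comm_semiring_1 \<Rightarrow> 'a" where
  "frobenius_trace q m x = (\<Sum>i<m. x ^ q ^ i)"

lemma mu_poly_fun_eq_frobenius_trace: "mu_poly_fun q m j = (\<lambda>x. frobenius_trace q m (x ^ j))"
  by (simp add: fun_eq_iff mu_poly_fun_def frobenius_trace_def power_mult)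

lemma frobenius_trace_mem_subfield_Fq:
  fixes x :: "'a::field"
  assumes "prime CHAR('a)" "q = CHAR('a) ^ k" "x ^ q ^ m = x"
  shows "frobenius_trace q m x \<in> subfield_Fq q"
proof -
  have "frobenius_trace q m x ^ q = (\<Sum>i<m. (x ^ q ^ i) ^ q)"
    unfolding frobenius_trace_def by (rule freshmans_dream_sum'[OF assms(1,2)])
  also have "\<dots> = (\<Sum>i<m. x ^ q ^ Suc i)"
    by (simp only: power_Suc2 power_mult)
  also have "\<dots> = frobenius_trace q m x"
  proof -
    have "(\<Sum>i<Suc m. x ^ q ^ i) = x ^ q ^ 0 + (\<Sum>i<m. x ^ q ^ Suc i)"
      by (rule sum.lessThan_Suc_shift)
    moreover have "(\<Sum>i<Suc m. x ^ q ^ i) = (\<Sum>i<m. x ^ q ^ i) + x ^ q ^ m"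
      by (rule sum.lessThan_Suc)
    ultimately show ?thesis
      using assms(3) by (simp add: frobenius_trace_def)
  qed
  finally show ?thesis
    by (simp add: subfield_Fq_def)
qed

lemma card_frobenius_trace_fiber_le:
  fixes t :: "'a::field"
  assumes "q \<ge> 2" "m > 0"
  shows "card {x. frobenius_trace q m x = t} \<le> q ^ (m - 1)"
proof -
  define P :: "'a poly" where "P = (\<Sum>i<m. monom 1 (q ^ i)) - monom t 0"
  have "q ^ i = q ^ (m - 1) \<longleftrightarrow> i = m - 1" if "i < m" for i
    using assms that power_inject_exp[of q i "m - 1"] by auto
  with assms have "coeff P (q ^ (m - 1)) = 1"
    by (simp add: P_def coeff_sum cong: if_cong)
  then have "P \<noteq> 0"
    by auto
  have "{x. frobenius_trace q m x = t} = {x. poly P x = 0}"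
    by (simp add: P_def poly_monom poly_sum frobenius_trace_def)
  also have "card \<dots> \<le> degree P"
    by (rule card_poly_roots_bound) fact
  also have "degree P \<le> q ^ (m - 1)"
  proof -
    have "degree (monom (1::'a) (q ^ i)) \<le> q ^ (m - 1)" if "i < m" for i
      using assms that by (intro order.trans[OF degree_monom_le] power_increasing) auto
    then have "degree (\<Sum>i<m. monom (1::'a) (q ^ i)) \<le> q ^ (m - 1)"
      by (intro degree_sum_le) auto
    then show ?thesis
      unfolding P_def by (intro order.trans[OF degree_diff_le_max]) (use degree_monom_le[of t 0] in auto)
  qed
  finally show ?thesis .
qed

lemma card_eq_sum_card_fibers:
  assumes "finite A" "finite B" "f ` A \<subseteq> B"
  shows "card A = (\<Sum>t\<in>B. card {x\<in>A. f x = t})"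
  using sum.group[OF assms, of "\<lambda>_. 1 :: nat"] by (simp only: card_eq_sum)

lemma card_fibers_eq_bound:
  assumes "finite A" "finite B" "f ` A \<subseteq> B"
    and fiber_le: "\<And>t. t \<in> B \<Longrightarrow> card {x\<in>A. f x = t} \<le> Q"
    and "card B * Q \<le> card A" and "t \<in> B"
  shows "card {x\<in>A. f x = t} = Q"
proof (rule ccontr)
  assume "card {x\<in>A. f x = t} \<noteq> Q"
  with fiber_le[OF \<open>t \<in> B\<close>] have "card {x\<in>A. f x = t} < Q"
    by simp
  with fiber_le \<open>t \<in> B\<close> have "(\<Sum>t\<in>B. card {x\<in>A. f x = t}) < (\<Sum>t\<in>B. Q)"
    by (intro sum_strict_mono_ex1 \<open>finite B\<close>) auto
  moreover have "card A = (\<Sum>t\<in>B. card {x\<in>A. f x = t})"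
    by (rule card_eq_sum_card_fibers) fact+
  ultimately show False
    using assms(5) by simp
qed

context
  fixes k q m :: nat
  assumes prime_CHAR: "prime CHAR('a::{finite,field})"
    and q_eq: "q = CHAR('a) ^ k" and k_pos: "k > 0"
    and card_UNIV: "card (UNIV :: 'a set) = q ^ m" and m_pos: "m > 0"
begin

lemma two_le_q: "q \<ge> 2"
proof -
  have "2 \<le> CHAR('a)"
    by (rule prime_ge_2_nat[OF prime_CHAR])
  also have "\<dots> \<le> q"
    using k_pos prime_gt_1_nat[OF prime_CHAR] by (simp add: q_eq self_le_power)
  finally show ?thesis .
qed

lemma range_frobenius_trace_subset: "range (frobenius_trace q m :: 'a \<Rightarrow> 'a) \<subseteq> subfield_Fq q"
proof (rule image_subsetI)
  fix x :: 'a
  have "x ^ q ^ m = x"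
    by (simp only: card_UNIV[symmetric] power_card_UNIV_eq_self)
  then show "frobenius_trace q m x \<in> subfield_Fq q"
    by (rule frobenius_trace_mem_subfield_Fq[OF prime_CHAR q_eq])
qed

lemma card_frobenius_trace_fiber:
  assumes "t \<in> subfield_Fq q"
  shows "card {x::'a. frobenius_trace q m x = t} = q ^ (m - 1)"
proof -
  have "card (subfield_Fq q :: 'a set) * q ^ (m - 1) \<le> q * q ^ (m - 1)"
    by (intro mult_le_mono1 card_subfield_Fq_le two_le_q)
  also have "\<dots> = card (UNIV :: 'a set)"
    using m_pos card_UNIV by (simp flip: power_Suc)
  finally have "card {x\<in>UNIV. frobenius_trace q m x = t} = q ^ (m - 1)"
    using range_frobenius_trace_subset card_frobenius_trace_fiber_le[OF two_le_q m_pos] assms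
    by (intro card_fibers_eq_bound) auto
  then show ?thesis
    by simp
qed

lemma range_frobenius_trace: "range (frobenius_trace q m :: 'a \<Rightarrow> 'a) = subfield_Fq q"
proof (intro equalityI range_frobenius_trace_subset subsetI)
  fix t :: 'a
  assume "t \<in> subfield_Fq q"
  then have "card {x. frobenius_trace q m x = t} = q ^ (m - 1)"
    by (rule card_frobenius_trace_fiber)
  with two_le_q have "{x. frobenius_trace q m x = t} \<noteq> {}"
    by (intro notI) simp
  then show "t \<in> range (frobenius_trace q m)"
    by blast
qed

lemma frobenius_trace_root_nonzero:
  assumes "m > 1"
  obtains x :: 'a where "x \<noteq> 0" "frobenius_trace q m x = 0"
proof -
  let ?Z = "{x::'a. frobenius_trace q m x = 0}"
  have "card ?Z = q ^ (m - 1)"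
    using two_le_q by (intro card_frobenius_trace_fiber zero_mem_subfield_Fq) simp
  moreover have "1 < q ^ (m - 1)"
    using assms two_le_q by (intro one_less_power) auto
  moreover have "card ?Z \<le> 1" if "?Z \<subseteq> {0}"
    using card_mono[OF _ that] by simp
  ultimately have "\<not> ?Z \<subseteq> {0}"
    by linarith
  then show ?thesis
    using that by blast
qed

context
  fixes j :: nat
  assumes j_pos: "j > 0" and coprime_j: "coprime j (q ^ m - 1)"
begin

lemma surj_power_exponent: "surj (\<lambda>x::'a. x ^ j)"
proof (rule bij_is_surj, rule bij_power_if_coprime[OF j_pos])
  show "coprime j (card (UNIV :: 'a set) - 1)"
    using coprime_j by (simp only: card_UNIV)
qed

lemma range_mu_poly_fun: "range (mu_poly_fun q m j :: 'a \<Rightarrow> 'a) = subfield_Fq q"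
proof -
  have "range (mu_poly_fun q m j :: 'a \<Rightarrow> 'a) = frobenius_trace q m ` range (\<lambda>x::'a. x ^ j)"
    by (simp add: mu_poly_fun_eq_frobenius_trace image_image)
  also have "\<dots> = subfield_Fq q"
    using surj_power_exponent range_frobenius_trace by simp
  finally show ?thesis .
qed

lemma mu_poly_fun_root_nonzero:
  assumes "m > 1"
  obtains x :: 'a where "x \<noteq> 0" "mu_poly_fun q m j x = 0"
proof -
  obtain z :: 'a where "z \<noteq> 0" "frobenius_trace q m z = 0"
    using frobenius_trace_root_nonzero[OF assms] by blast
  moreover obtain x :: 'a where "z = x ^ j"
    using surj_power_exponent by (metis surjD)
  ultimately show ?thesis
    using that j_pos by (simp add: mu_poly_fun_eq_frobenius_trace)
qed

end

end

lemma mu_poly_fun_mult_mem_subfield_Fq: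
  assumes "c \<in> subfield_Fq q"
  shows "mu_poly_fun q m j (x * c) = mu_poly_fun q m j x * c ^ j"
proof -
  have "c ^ (j * q ^ i) = (c ^ q ^ i) ^ j" for i
    by (simp only: power_mult[symmetric] mult.commute)
  with assms have "c ^ (j * q ^ i) = c ^ j" for i
    by (simp add: subfield_Fq_def power_power_eq_self)
  then show ?thesis
    by (simp add: mu_poly_fun_def power_mult_distrib sum_distrib_right)
qed

text \<open>The criterion of Akbary, Ghioca and Wang for the semiconjugacy \<open>\<mu> \<circ> f = g \<circ> \<mu>\<close>.\<close>

lemma bij_mult_invariant_iff:
  fixes \<mu> H :: "'a::{finite,field} \<Rightarrow> 'a"
  assumes range_\<mu>: "range \<mu> = S" and root: "x\<^sub>0 \<noteq> 0" "\<mu> x\<^sub>0 = 0" and "j > 0"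
    and semiconj: "\<And>x. \<mu> (x * H (\<mu> x)) = \<mu> x * H (\<mu> x) ^ j"
  shows "bij (\<lambda>x. x * H (\<mu> x)) \<longleftrightarrow> H 0 \<noteq> 0 \<and> bij_betw (\<lambda>t. t * H t ^ j) S S"
proof -
  define f where "f x = x * H (\<mu> x)" for x
  define g where "g t = t * H t ^ j" for t
  have g_\<mu>: "\<mu> (f x) = g (\<mu> x)" for x
    by (simp add: f_def g_def semiconj)
  have \<mu>_mem: "\<mu> x \<in> S" for x
    using range_\<mu> by blast
  have "bij f \<longleftrightarrow> H 0 \<noteq> 0 \<and> bij_betw g S S"
  proof
    assume "bij f"
    have "H 0 \<noteq> 0"
    proof
      assume "H 0 = 0"
      with root have "f x\<^sub>0 = f 0"
        by (simp add: f_def)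
      with \<open>bij f\<close> root show False
        by (auto dest: bij_is_inj injD)
    qed
    moreover have "g ` S = S"
    proof -
      have "g ` S = range (\<lambda>x. \<mu> (f x))"
        by (simp add: range_\<mu>[symmetric] image_image g_\<mu>)
      also have "\<dots> = \<mu> ` range f"
        by (simp only: image_image)
      finally show ?thesis
        using \<open>bij f\<close> range_\<mu> by (simp add: bij_is_surj)
    qed
    then have "bij_betw g S S"
      by (simp add: bij_betw_def eq_card_imp_inj_on)
    ultimately show "H 0 \<noteq> 0 \<and> bij_betw g S S"
      by blast
  next
    assume "H 0 \<noteq> 0 \<and> bij_betw g S S"
    then have "H 0 \<noteq> 0" and inj_g: "inj_on g S"
      by (auto simp: bij_betw_def)
    have H_\<mu>: "H (\<mu> x) \<noteq> 0" for x
    proof (cases "\<mu> x = 0")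
      case False
      have "g (\<mu> x) \<noteq> g (\<mu> x\<^sub>0)"
        using inj_onD[OF inj_g _ \<mu>_mem \<mu>_mem] False root by metis
      with root \<open>j > 0\<close> show ?thesis
        by (auto simp: g_def)
    qed (use \<open>H 0 \<noteq> 0\<close> in simp)
    have "inj f"
    proof (rule injI)
      fix x y
      assume "f x = f y"
      then have "g (\<mu> x) = g (\<mu> y)"
        by (simp flip: g_\<mu>)
      then have "\<mu> x = \<mu> y"
        using inj_onD[OF inj_g _ \<mu>_mem \<mu>_mem] by blast
      with \<open>f x = f y\<close> H_\<mu>[of x] show "x = y"
        by (simp add: f_def)
    qed
    then show "bij f"
      by (simp add: bij_def finite_UNIV_inj_surj)
  qed
  then show ?thesis
    by (simp add: f_def[abs_def] g_def[abs_def])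
qed

theorem theorem3p2:
  fixes q m j :: nat and h :: "'a::{finite,field} poly"
  assumes "\<exists>p k. prime p \<and> k > 0 \<and> q = p ^ k"
    and "card (UNIV :: 'a set) = q ^ m"
    and "m > 1"
    and "1 \<le> j" and "j \<le> q ^ m - 1"
    and "coprime j (q ^ m - 1)"
    and "\<forall>i. coeff h i \<in> subfield_Fq q"
  shows "bij (\<lambda>x::'a. x * poly h (mu_poly_fun q m j x)) \<longleftrightarrow>
         (poly h 0 \<noteq> 0 \<and>
          bij_betw (\<lambda>x::'a. x * (poly h x) ^ j) (subfield_Fq q) (subfield_Fq q))"
proof -
  obtain p k where p: "prime p" "k > 0" "q = p ^ k"
    using assms(1) by blast
  have "CHAR('a) = p"
    using CHAR_eq_prime_of_card[of p "k * m"] p assms(2) by (simp add: power_mult)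
  with p have prime_CHAR: "prime CHAR('a)" and q_eq: "q = CHAR('a) ^ k"
    by simp_all
  have "m > 0" "j > 0"
    using assms(3,4) by simp_all
  note setting = prime_CHAR q_eq \<open>k > 0\<close> assms(2) \<open>m > 0\<close> \<open>j > 0\<close> assms(6)
  obtain x\<^sub>0 :: 'a where "x\<^sub>0 \<noteq> 0" "mu_poly_fun q m j x\<^sub>0 = 0"
    using mu_poly_fun_root_nonzero[OF setting assms(3)] by blast
  from range_mu_poly_fun[OF setting] this \<open>j > 0\<close> show ?thesis
  proof (rule bij_mult_invariant_iff)
    show "mu_poly_fun q m j (x * poly h (mu_poly_fun q m j x)) =
        mu_poly_fun q m j x * poly h (mu_poly_fun q m j x) ^ j" for x :: 'a
      using poly_mem_subfield_Fq[OF prime_CHAR q_eq assms(7)] range_mu_poly_fun[OF setting]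
      by (intro mu_poly_fun_mult_mem_subfield_Fq) blast
  qed
qed

end
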